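(* Let $M$ be a deterministic classical Turing machine operating in time $f(n)$, where $n$ is the input size. Then there exists a measurement-based quantum Turing machine $M'$ operating in expected time $O(f(n))$ such that for every input $x$, $M(x)=M'(\ket x)$.
   Context: A deterministic Turing machine (TM) is a triple $M=(K,\Sigma,\delta)$: $K$ finite set of states with initial state $s$, $\Sigma$ finite alphabet containing a blank $\#$, $\delta:K\times\Sigma\to(K\cup\{\text{yes},\text{no},h\})\times\Sigma\times\{\leftarrow,\rightarrow,-\}$; its output is yes/no if that state is reached, and the final tape contents if $h$ is reached (for a quantum machine ending in $h$, equality of outputs means the final quantum tape is the basis state encoding the classical tape contents). A (one-tape) classically-controlled quantum Turing machine (CQTM) is a quintuple $M=(K,\Sigma_C,\Sigma_Q,\mathcal A,\delta)$: $K$ finite set of classical states with initial state $s$; $\Sigma_Q$ finite alphabet containing blank $\#$, labelling an orthonormal basis of each quantum cell of an infinite tape; $\Sigma_C$ finite alphabet of classical outcomes containing $\#,\overline\#$; $\mathcal A$ finite set of one-cell admissible transformations (families $\{M_c\}_c$ of operators with $\sum_c M_c^\dagger M_c=\mathrm{Id}$, outcomes in $\Sigma_C$) containing the blank test $\{\ket\#\bra\#,I-\ket\#\bra\#\}$; $\delta:K\times\Sigma_C\to(K\cup\{\text{yes},\text{no},h\})\times\{\leftarrow,\rightarrow,-\}\times\mathcal A$ total. At each step (one time unit), in state $q$ with last outcome $\tau$ and $\delta(q,\tau)=(p,D,A)$, the head moves by $D$, then $A=\{M_c\}$ is applied to the pointed cell, yielding outcome $c$ with probability $\bra\psi M_c^\dagger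 M_c\ket\psi$ and new tape state $M_c\ket\psi$ normalized; the new state is $p$, last outcome $c$. The input is placed on adjacent cells (others $\ket\#$), the head starts on the blank cell just left of the input, initial state $s$, initial last outcome $\#$. Halting on yes/no gives that output; halting on $h$ gives the state of the tape from its leftmost to rightmost non-$\ket\#$ cell. A measurement-based quantum Turing machine (MQTM) is a CQTM all of whose admissible transformations in $\mathcal A$ are projective measurements, i.e. families $\{P_k\}$ of orthogonal projectors with $P_kP_l=\delta_{kl}P_k$ and $\sum_k P_k=\mathrm{Id}$. Its running time is a random variable; "expected time" refers to its expectation. *)

theory Defs
  imports "HOL-Analysis.Analysis"
begin

datatype 's st = St 's | Yes | No | Halt

datatype dir = Lft | Rgt | Stay

fun mv :: "dir \<Rightarrow> int" where
  "mv Lft = -1" | "mv Rgt = 1" | "mv Stay = 0"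

definition halted :: "'s st \<Rightarrow> bool" where
  "halted q \<longleftrightarrow> (\<forall>p. q \<noteq> St p)"

datatype 'a tm_out = OYes | ONo | OTape "'a list"

definition trim :: "'a \<Rightarrow> (int \<Rightarrow> 'a) \<Rightarrow> 'a list" where
  "trim b t = (let S = {i. t i \<noteq> b} in if S = {} then [] else map t [Min S..Max S])"

text \<open>Input placed on cells 1..n, all other cells blank; the head starts on cell 0.\<close>
definition init_tape :: "'a \<Rightarrow> 'a list \<Rightarrow> int \<Rightarrow> 'a" where
  "init_tape b x = (\<lambda>i. if 1 \<le> i \<and> i \<le> int (length x) then x ! nat (i - 1) else b)"

record ('s, 'a) tm =
  tm_states :: "'s set"
  tm_alpha :: "'a set"
  tm_blank :: 'a
  tm_start :: 's
  tm_delta :: "'s \<Rightarrow> 'a \<Rightarrow> 's st \<times> 'a \<times> dir"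

definition wf_tm :: "('s, 'a) tm \<Rightarrow> bool" where
  "wf_tm M \<longleftrightarrow> finite (tm_states M) \<and> finite (tm_alpha M) \<and> tm_blank M \<in> tm_alpha M
     \<and> tm_start M \<in> tm_states M
     \<and> (\<forall>q\<in>tm_states M. \<forall>a\<in>tm_alpha M. case tm_delta M q a of (p, b, D) \<Rightarrow>
          p \<in> St ` tm_states M \<union> {Yes, No, Halt} \<and> b \<in> tm_alpha M)"

fun tm_step :: "('s, 'a) tm \<Rightarrow> 's st \<times> (int \<Rightarrow> 'a) \<times> int \<Rightarrow> 's st \<times> (int \<Rightarrow> 'a) \<times> int" where
  "tm_step M (q, t, h) = (case q of
      St p \<Rightarrow> (case tm_delta M p (t h) of (p', b, D) \<Rightarrow> (p', t(h := b), h + mv D))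
    | _ \<Rightarrow> (q, t, h))"

definition tm_conf :: "('s, 'a) tm \<Rightarrow> 'a list \<Rightarrow> nat \<Rightarrow> 's st \<times> (int \<Rightarrow> 'a) \<times> int" where
  "tm_conf M x n = (tm_step M ^^ n) (St (tm_start M), init_tape (tm_blank M) x, 0)"

definition valid_input :: "('s, 'a) tm \<Rightarrow> 'a list \<Rightarrow> bool" where
  "valid_input M x \<longleftrightarrow> set x \<subseteq> tm_alpha M - {tm_blank M}"

definition tm_runs_in_time :: "('s, 'a) tm \<Rightarrow> (nat \<Rightarrow> nat) \<Rightarrow> bool" where
  "tm_runs_in_time M f \<longleftrightarrow>
     (\<forall>x. valid_input M x \<longrightarrow> (\<exists>n\<le>f (length x). halted (fst (tm_conf M x n))))"

definition tm_output :: "('s, 'a) tm \<Rightarrow> 'a list \<Rightarrow> 'a tm_out" where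
  "tm_output M x = (case tm_conf M x (LEAST n. halted (fst (tm_conf M x n))) of (q, t, h) \<Rightarrow>
      (case q of Yes \<Rightarrow> OYes | No \<Rightarrow> ONo | _ \<Rightarrow> OTape (trim (tm_blank M) t)))"

text \<open>A one-cell operator is a matrix indexed by the quantum alphabet: F k a = <k|F|a>.
  An admissible transformation is a family of such operators indexed by classical outcomes.\<close>
type_synonym 'q mat = "'q \<Rightarrow> 'q \<Rightarrow> complex"

record 'q cqtm =
  cq_states :: "nat set"
  cq_calpha :: "nat set"
  cq_cblank :: nat
  cq_cblankbar :: nat
  cq_qalpha :: "'q set"
  cq_qblank :: 'q
  cq_adm :: "(nat \<Rightarrow> 'q mat) set"
  cq_start :: nat
  cq_delta :: "nat \<Rightarrow> nat \<Rightarrow> nat st \<times> dir \<times> (nat \<Rightarrow> 'q mat)"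

definition supported :: "nat set \<Rightarrow> 'q set \<Rightarrow> (nat \<Rightarrow> 'q mat) \<Rightarrow> bool" where
  "supported SC SQ F \<longleftrightarrow> (\<forall>c k a. c \<notin> SC \<or> k \<notin> SQ \<or> a \<notin> SQ \<longrightarrow> F c k a = 0)"

definition admissible :: "nat set \<Rightarrow> 'q set \<Rightarrow> (nat \<Rightarrow> 'q mat) \<Rightarrow> bool" where
  "admissible SC SQ F \<longleftrightarrow> supported SC SQ F \<and>
     (\<forall>a\<in>SQ. \<forall>b\<in>SQ. (\<Sum>c\<in>SC. \<Sum>k\<in>SQ. cnj (F c k a) * F c k b) = (if a = b then 1 else 0))"

definition projective :: "nat set \<Rightarrow> 'q set \<Rightarrow> (nat \<Rightarrow> 'q mat) \<Rightarrow> bool" where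
  "projective SC SQ F \<longleftrightarrow> supported SC SQ F
     \<and> (\<forall>c\<in>SC. \<forall>a\<in>SQ. \<forall>b\<in>SQ. F c a b = cnj (F c b a))
     \<and> (\<forall>c\<in>SC. \<forall>d\<in>SC. \<forall>a\<in>SQ. \<forall>b\<in>SQ.
          (\<Sum>k\<in>SQ. F c a k * F d k b) = (if c = d then F c a b else 0))
     \<and> (\<forall>a\<in>SQ. \<forall>b\<in>SQ. (\<Sum>c\<in>SC. F c a b) = (if a = b then 1 else 0))"

definition blank_test :: "'q cqtm \<Rightarrow> nat \<Rightarrow> 'q mat" where
  "blank_test M = (\<lambda>c k a.
     if k \<in> cq_qalpha M \<and> a \<in> cq_qalpha M then
       (if c = cq_cblank M then (if k = cq_qblank M \<and> a = cq_qblank M then 1 else 0)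
        else if c = cq_cblankbar M then (if k = a \<and> a \<noteq> cq_qblank M then 1 else 0)
        else 0)
     else 0)"

definition wf_cqtm :: "'q cqtm \<Rightarrow> bool" where
  "wf_cqtm M \<longleftrightarrow> finite (cq_states M) \<and> cq_start M \<in> cq_states M
     \<and> finite (cq_calpha M) \<and> cq_cblank M \<in> cq_calpha M \<and> cq_cblankbar M \<in> cq_calpha M
     \<and> cq_cblank M \<noteq> cq_cblankbar M
     \<and> finite (cq_qalpha M) \<and> cq_qblank M \<in> cq_qalpha M
     \<and> finite (cq_adm M) \<and> (\<forall>F\<in>cq_adm M. admissible (cq_calpha M) (cq_qalpha M) F)
     \<and> blank_test M \<in> cq_adm M
     \<and> (\<forall>q\<in>cq_states M. \<forall>\<tau>\<in>cq_calpha M. case cq_delta M q \<tau> of (p, D, F) \<Rightarrow>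
          p \<in> St ` cq_states M \<union> {Yes, No, Halt} \<and> F \<in> cq_adm M)"

definition is_mqtm :: "'q cqtm \<Rightarrow> bool" where
  "is_mqtm M \<longleftrightarrow> wf_cqtm M \<and> (\<forall>F\<in>cq_adm M. projective (cq_calpha M) (cq_qalpha M) F)"

text \<open>Quantum tape states: (unnormalised) vectors over the basis of tape configurations.\<close>
definition basis :: "(int \<Rightarrow> 'q) \<Rightarrow> (int \<Rightarrow> 'q) \<Rightarrow> complex" where
  "basis u = (\<lambda>v. if v = u then 1 else 0)"

definition apply_at :: "'q set \<Rightarrow> 'q mat \<Rightarrow> int \<Rightarrow> ((int \<Rightarrow> 'q) \<Rightarrow> complex) \<Rightarrow> (int \<Rightarrow> 'q) \<Rightarrow> complex" where
  "apply_at SQ A i \<psi> = (\<lambda>u. \<Sum>a\<in>SQ. A (u i) a * \<psi> (u(i := a)))"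

text \<open>Squared norm (reachable tape states are finite superpositions).\<close>
definition norm2 :: "((int \<Rightarrow> 'q) \<Rightarrow> complex) \<Rightarrow> real" where
  "norm2 \<psi> = (\<Sum>u\<in>{u. \<psi> u \<noteq> 0}. (cmod (\<psi> u))\<^sup>2)"

text \<open>Run along a sequence of outcomes (latest outcome first): classical configuration
  (state, last outcome, head position) and the unnormalised tape state, whose squared norm
  is the probability of that outcome sequence.\<close>
primrec cq_run :: "'q cqtm \<Rightarrow> 'q list \<Rightarrow> nat list \<Rightarrow> (nat st \<times> nat \<times> int) \<times> ((int \<Rightarrow> 'q) \<Rightarrow> complex)" where
  "cq_run M xs [] = ((St (cq_start M), cq_cblank M, 0), basis (init_tape (cq_qblank M) xs))"
| "cq_run M xs (c # ws) = (case cq_run M xs ws of ((q, \<tau>, h), \<psi>) \<Rightarrow>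
     (case q of
        St p \<Rightarrow> (case cq_delta M p \<tau> of (p', D, F) \<Rightarrow>
                   ((p', c, h + mv D), apply_at (cq_qalpha M) (F c) (h + mv D) \<psi>))
      | _ \<Rightarrow> ((q, \<tau>, h), \<psi>)))"

definition prob_running :: "'q cqtm \<Rightarrow> 'q list \<Rightarrow> nat \<Rightarrow> real" where
  "prob_running M xs t = (\<Sum>w\<in>{w. length w = t \<and> set w \<subseteq> cq_calpha M
        \<and> \<not> halted (fst (fst (cq_run M xs w)))}. norm2 (snd (cq_run M xs w)))"

text \<open>Expected running time E[T] = sum over t of P(T > t).\<close>
definition expected_time :: "'q cqtm \<Rightarrow> 'q list \<Rightarrow> ennreal" where
  "expected_time M xs = (\<Sum>t. ennreal (prob_running M xs t))"

definition cq_outputs :: "'q cqtm \<Rightarrow> 'q list \<Rightarrow> 'q tm_out \<Rightarrow> bool" where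
  "cq_outputs M xs out \<longleftrightarrow> (\<forall>w. set w \<subseteq> cq_calpha M \<longrightarrow>
     (case cq_run M xs w of ((q, \<tau>, h), \<psi>) \<Rightarrow>
        halted q \<and> norm2 \<psi> \<noteq> 0 \<longrightarrow>
        (case out of
           OYes \<Rightarrow> q = Yes
         | ONo \<Rightarrow> q = No
         | OTape ys \<Rightarrow> q = Halt \<and>
             (\<exists>c u. c \<noteq> 0 \<and> \<psi> = (\<lambda>v. if v = u then c else 0) \<and> trim (cq_qblank M) u = ys))))"

end

theory Submission
  imports Defs
begin

text \<open>Every step of M is simulated with projective one-cell measurements only. Reading is a
  measurement in the computational basis, which leaves a basis state unchanged. Writing b over a
  alternates the measurement of the projector onto (|a> + |b>) / sqrt 2 with a computational-basis
  measurement: each such round turns |a> into |b> with probability 1/2 and otherwise restores |a>,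
  so it is simply repeated. Hence every branch of the run carries, up to its amplitude, a basis
  state encoding a configuration of M, and the output is that of M. A potential of 5 per
  remaining step of M, weighted by the branch probabilities, decreases in expectation by at least
  the probability of still running, so the expected running time is at most 1 + 5 T, where
  T <= f(n) is the running time of M.\<close>

section \<open>Projective measurements on one cell\<close>

lemma sum_mult_delta_right:
  fixes g :: "'a \<Rightarrow> 'b::semiring_1"
  assumes "finite S" "b \<in> S"
  shows "(\<Sum>k\<in>S. g k * (if k = b then 1 else 0)) = g b"
proof -
  have "(\<Sum>k\<in>S. g k * (if k = b then 1 else 0)) = (\<Sum>k\<in>S. if k = b then g k else 0)"
    by (intro sum.cong) auto
  then show ?thesis using assms by simp
qed

lemma sum_mult_delta_left:
  fixes g :: "'a \<Rightarrow> 'b::semiring_1"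
  assumes "finite S" "a \<in> S"
  shows "(\<Sum>k\<in>S. (if a = k then 1 else 0) * g k) = g a"
proof -
  have "(\<Sum>k\<in>S. (if a = k then 1 else 0) * g k) = (\<Sum>k\<in>S. if a = k then g k else 0)"
    by (intro sum.cong) auto
  then show ?thesis using assms by simp
qed

lemma sum_eq_single:
  assumes "finite A" "a \<in> A" "\<And>c. c \<in> A \<Longrightarrow> c \<noteq> a \<Longrightarrow> g c = 0"
  shows "sum g A = g a"
  using assms by (subst sum.mono_neutral_right[of A "{a}"]) auto

lemma sum_eq_pair:
  assumes "finite A" "a \<in> A" "b \<in> A" "a \<noteq> b" "\<And>c. c \<in> A \<Longrightarrow> c \<noteq> a \<Longrightarrow> c \<noteq> b \<Longrightarrow> g c = 0"
  shows "sum g A = g a + g b"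
  using assms by (subst sum.mono_neutral_right[of A "{a, b}"]) auto

definition orth_projector :: "'q set \<Rightarrow> 'q mat \<Rightarrow> bool" where
  "orth_projector SQ P \<longleftrightarrow>
     (\<forall>a\<in>SQ. \<forall>b\<in>SQ. P a b = cnj (P b a) \<and> (\<Sum>k\<in>SQ. P a k * P k b) = P a b)"

definition binary_measurement :: "'q set \<Rightarrow> nat \<Rightarrow> nat \<Rightarrow> 'q mat \<Rightarrow> nat \<Rightarrow> 'q mat" where
  "binary_measurement SQ c1 c2 P = (\<lambda>c k l. if k \<in> SQ \<and> l \<in> SQ then
      (if c = c1 then P k l else if c = c2 then (if k = l then 1 else 0) - P k l else 0)
    else 0)"

lemma binary_measurement_projective:
  assumes fin: "finite SQ" "finite SC" and c: "c1 \<in> SC" "c2 \<in> SC" "c1 \<noteq> c2"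
    and P: "orth_projector SQ P"
  shows "projective SC SQ (binary_measurement SQ c1 c2 P)"
  unfolding projective_def
proof (intro conjI ballI)
  let ?F = "binary_measurement SQ c1 c2 P"
  have sa: "P a b = cnj (P b a)" and idem: "(\<Sum>k\<in>SQ. P a k * P k b) = P a b"
    if "a \<in> SQ" "b \<in> SQ" for a b
    using P that unfolding orth_projector_def by blast+
  show "supported SC SQ ?F"
    using c unfolding supported_def binary_measurement_def by auto
  show "?F c a b = cnj (?F c b a)" if "a \<in> SQ" "b \<in> SQ" for c a b
    using sa[OF that] that by (auto simp: binary_measurement_def)
  show "(\<Sum>c\<in>SC. ?F c a b) = (if a = b then 1 else 0)" if "a \<in> SQ" "b \<in> SQ" for a b
  proof -
    have "(\<Sum>c\<in>SC. ?F c a b) = (\<Sum>c\<in>{c1, c2}. ?F c a b)"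
      using fin c by (intro sum.mono_neutral_right) (auto simp: binary_measurement_def)
    then show ?thesis using c that by (simp add: binary_measurement_def)
  qed
  fix c d a b assume "c \<in> SC" "d \<in> SC" and ab: "a \<in> SQ" "b \<in> SQ"
  define Q where "Q k l = (if k = l then 1 else 0) - P k l" for k l
  have PQ: "(\<Sum>k\<in>SQ. P a k * Q k b) = 0"
    using fin ab idem by (simp add: Q_def right_diff_distrib sum_subtractf sum_mult_delta_right)
  have QP: "(\<Sum>k\<in>SQ. Q a k * P k b) = 0"
    using fin ab idem by (simp add: Q_def left_diff_distrib sum_subtractf sum_mult_delta_left)
  have QQ: "(\<Sum>k\<in>SQ. Q a k * Q k b) = Q a b"
    using fin ab PQ by (simp add: Q_def left_diff_distrib sum_subtractf sum_mult_delta_left)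
  have F: "?F e a' b' = (if e = c1 then P a' b' else if e = c2 then Q a' b' else 0)"
    if "a' \<in> SQ" "b' \<in> SQ" for e a' b'
    using that by (simp add: binary_measurement_def Q_def)
  have "(\<Sum>k\<in>SQ. ?F c a k * ?F d k b) = (\<Sum>k\<in>SQ.
      (if c = c1 then P a k else if c = c2 then Q a k else 0) *
      (if d = c1 then P k b else if d = c2 then Q k b else 0))"
    using ab by (intro sum.cong) (simp_all add: F)
  also have "\<dots> = (if c = d then ?F c a b else 0)"
    using c PQ QP QQ idem[OF ab]
    by (cases "c = c1"; cases "c = c2"; cases "d = c1"; cases "d = c2") (simp_all add: F[OF ab])
  finally show "(\<Sum>k\<in>SQ. ?F c a k * ?F d k b) = (if c = d then ?F c a b else 0)" .
qed

lemma projective_imp_admissible: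
  assumes "projective SC SQ F"
  shows "admissible SC SQ F"
  unfolding admissible_def
proof (intro conjI ballI)
  show "supported SC SQ F" using assms unfolding projective_def by blast
  fix a b assume ab: "a \<in> SQ" "b \<in> SQ"
  have "cnj (F c k a) = F c a k" if "c \<in> SC" "k \<in> SQ" for c k
    using assms that ab unfolding projective_def by (metis complex_cnj_cnj)
  then have "(\<Sum>c\<in>SC. \<Sum>k\<in>SQ. cnj (F c k a) * F c k b) = (\<Sum>c\<in>SC. \<Sum>k\<in>SQ. F c a k * F c k b)"
    by (intro sum.cong) auto
  also have "\<dots> = (\<Sum>c\<in>SC. F c a b)"
  proof (rule sum.cong)
    fix c assume "c \<in> SC"
    then show "(\<Sum>k\<in>SQ. F c a k * F c k b) = F c a b"
      using assms ab unfolding projective_def by (metis (no_types, lifting))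
  qed simp
  also have "\<dots> = (if a = b then 1 else 0)"
    using assms ab unfolding projective_def by blast
  finally show "(\<Sum>c\<in>SC. \<Sum>k\<in>SQ. cnj (F c k a) * F c k b) = (if a = b then 1 else 0)" .
qed

definition basis_measurement :: "'q set \<Rightarrow> ('q \<Rightarrow> nat) \<Rightarrow> nat \<Rightarrow> 'q mat" where
  "basis_measurement SQ out = (\<lambda>c k l. if k \<in> SQ \<and> l = k \<and> c = out k then 1 else 0)"

lemma basis_measurement_projective:
  assumes fin: "finite SQ" "finite SC" and out: "out ` SQ \<subseteq> SC"
  shows "projective SC SQ (basis_measurement SQ out)"
  unfolding projective_def
proof (intro conjI ballI)
  let ?F = "basis_measurement SQ out"
  show "supported SC SQ ?F" using out unfolding supported_def basis_measurement_def by auto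
  show "?F c a b = cnj (?F c b a)" for c a b by (auto simp: basis_measurement_def)
  fix a b assume ab: "a \<in> SQ" "b \<in> SQ"
  have "(\<Sum>c\<in>SC. ?F c a b) = (\<Sum>c\<in>SC. if c = out a then (if a = b then 1 else 0) else 0)"
    using ab by (intro sum.cong) (auto simp: basis_measurement_def)
  also have "\<dots> = (if a = b then 1 else 0)" using fin out ab by (simp add: sum.delta image_subset_iff)
  finally show "(\<Sum>c\<in>SC. ?F c a b) = (if a = b then 1 else 0)" .
  fix c d
  have "(\<Sum>k\<in>SQ. ?F c a k * ?F d k b) =
      (\<Sum>k\<in>SQ. if k = a then (if c = out a \<and> b = a \<and> d = out a then 1 else 0) else 0)"
    using ab by (intro sum.cong) (auto simp: basis_measurement_def)
  also have "\<dots> = (if c = d then ?F c a b else 0)"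
    using ab fin by (auto simp: sum.delta' basis_measurement_def)
  finally show "(\<Sum>k\<in>SQ. ?F c a k * ?F d k b) = (if c = d then ?F c a b else 0)" .
qed

definition ket_proj :: "'q \<Rightarrow> 'q mat" where
  "ket_proj A = (\<lambda>k l. if k = A \<and> l = A then 1 else 0)"

text \<open>The projector onto (|A> + |B>) / sqrt 2, for A \<noteq> B.\<close>
definition pair_proj :: "'q \<Rightarrow> 'q \<Rightarrow> 'q mat" where
  "pair_proj A B = (\<lambda>k l. if k \<in> {A, B} \<and> l \<in> {A, B} then 1/2 else 0)"

lemma orth_projector_ket_proj:
  assumes "finite SQ" "A \<in> SQ"
  shows "orth_projector SQ (ket_proj A)"
  unfolding orth_projector_def
proof (intro ballI conjI)
  fix a b assume "a \<in> SQ" "b \<in> SQ"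
  show "ket_proj A a b = cnj (ket_proj A b a)" by (auto simp: ket_proj_def)
  have "(\<Sum>k\<in>SQ. ket_proj A a k * ket_proj A k b) = (\<Sum>k\<in>SQ. if k = A then ket_proj A a b else 0)"
    by (intro sum.cong) (auto simp: ket_proj_def)
  then show "(\<Sum>k\<in>SQ. ket_proj A a k * ket_proj A k b) = ket_proj A a b"
    using assms by simp
qed

lemma orth_projector_pair_proj:
  assumes "finite SQ" "A \<in> SQ" "B \<in> SQ" "A \<noteq> B"
  shows "orth_projector SQ (pair_proj A B)"
  unfolding orth_projector_def
proof (intro ballI conjI)
  fix a b assume "a \<in> SQ" "b \<in> SQ"
  show "pair_proj A B a b = cnj (pair_proj A B b a)" by (auto simp: pair_proj_def)
  have "(\<Sum>k\<in>SQ. pair_proj A B a k * pair_proj A B k b) = (\<Sum>k\<in>{A, B}. pair_proj A B a k * pair_proj A B k b)"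
    using assms by (intro sum.mono_neutral_right) (auto simp: pair_proj_def)
  then show "(\<Sum>k\<in>SQ. pair_proj A B a k * pair_proj A B k b) = pair_proj A B a b"
    using assms by (auto simp: pair_proj_def)
qed

section \<open>Tape states\<close>

definition ket :: "complex \<Rightarrow> (int \<Rightarrow> 'q) \<Rightarrow> (int \<Rightarrow> 'q) \<Rightarrow> complex" where
  "ket \<alpha> u = (\<lambda>v. if v = u then \<alpha> else 0)"

definition ket_sum :: "complex \<Rightarrow> (int \<Rightarrow> 'q) \<Rightarrow> complex \<Rightarrow> (int \<Rightarrow> 'q) \<Rightarrow> (int \<Rightarrow> 'q) \<Rightarrow> complex" where
  "ket_sum \<alpha> u \<beta> u' = (\<lambda>v. ket \<alpha> u v + ket \<beta> u' v)"

lemma basis_eq_ket: "basis u = ket 1 u"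
  unfolding basis_def ket_def by simp

lemma apply_at_zero: "apply_at SQ A i (\<lambda>_. 0) = (\<lambda>_. 0)"
  unfolding apply_at_def by simp

lemma apply_at_ket:
  assumes "finite SQ" "u i \<in> SQ"
  shows "apply_at SQ A i (ket \<alpha> u) = (\<lambda>v. if v(i := u i) = u then A (v i) (u i) * \<alpha> else 0)"
proof
  fix v
  have "A (v i) a * ket \<alpha> u (v(i := a)) = (if a = u i then (if v(i := u i) = u then A (v i) (u i) * \<alpha> else 0) else 0)"
    for a
    by (cases "v(i := a) = u") (auto simp: ket_def)
  then have "apply_at SQ A i (ket \<alpha> u) v = (\<Sum>a\<in>SQ. if a = u i then (if v(i := u i) = u then A (v i) (u i) * \<alpha> else 0) else 0)"
    unfolding apply_at_def by simp
  also have "\<dots> = (if v(i := u i) = u then A (v i) (u i) * \<alpha> else 0)"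
    using assms by (simp add: sum.delta')
  finally show "apply_at SQ A i (ket \<alpha> u) v = (if v(i := u i) = u then A (v i) (u i) * \<alpha> else 0)" .
qed

lemma apply_at_ket_sum:
  "apply_at SQ A i (ket_sum \<alpha> u \<beta> u') = (\<lambda>v. apply_at SQ A i (ket \<alpha> u) v + apply_at SQ A i (ket \<beta> u') v)"
  unfolding apply_at_def ket_sum_def by (simp add: distrib_left sum.distrib)

lemma apply_at_basis_measurement_ket:
  assumes "finite SQ" "u i \<in> SQ"
  shows "apply_at SQ (basis_measurement SQ out c) i (ket \<alpha> u) = (if c = out (u i) then ket \<alpha> u else (\<lambda>_. 0))"
proof
  fix v
  have "v(i := u i) = u \<Longrightarrow> v \<noteq> u \<Longrightarrow> v i \<noteq> u i" by (metis fun_upd_triv)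
  then show "apply_at SQ (basis_measurement SQ out c) i (ket \<alpha> u) v = (if c = out (u i) then ket \<alpha> u else (\<lambda>_. 0)) v"
    unfolding apply_at_ket[of SQ u i, OF assms] using assms by (auto simp: basis_measurement_def ket_def)
qed

lemma apply_at_basis_measurement_ket_sum:
  assumes "finite SQ" "u i \<in> SQ" "u' i \<in> SQ" "out (u i) \<noteq> out (u' i)"
  shows "apply_at SQ (basis_measurement SQ out c) i (ket_sum \<alpha> u \<beta> u') =
    (if c = out (u i) then ket \<alpha> u else if c = out (u' i) then ket \<beta> u' else (\<lambda>_. 0))"
  using assms by (auto simp: apply_at_ket_sum apply_at_basis_measurement_ket)

lemma apply_at_pair_measurement_ket:
  assumes fin: "finite SQ" and AB: "A \<in> SQ" "B \<in> SQ" "A \<noteq> B" and c12: "c1 \<noteq> c2" and ui: "u i = A"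
  shows "apply_at SQ (binary_measurement SQ c1 c2 (pair_proj A B) c) i (ket \<alpha> u) =
    (if c = c1 then ket_sum (\<alpha>/2) u (\<alpha>/2) (u(i := B))
     else if c = c2 then ket_sum (\<alpha>/2) u (-(\<alpha>/2)) (u(i := B)) else (\<lambda>_. 0))"
    (is "_ = ?rhs")
proof -
  let ?F = "binary_measurement SQ c1 c2 (pair_proj A B) c"
  let ?u' = "u(i := B)"
  have uu': "u \<noteq> ?u'" using ui AB by (metis fun_upd_same)
  have "apply_at SQ ?F i (ket \<alpha> u) = (\<lambda>v. if v(i := u i) = u then ?F (v i) (u i) * \<alpha> else 0)"
    using fin ui AB by (intro apply_at_ket) auto
  also have "\<dots> = ?rhs"
  proof
    fix v
    consider "v = u" | "v = ?u'" | "v(i := u i) = u" "v \<noteq> u" "v \<noteq> ?u'" | "v(i := u i) \<noteq> u"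
      by blast
    then show "(if v(i := u i) = u then ?F (v i) (u i) * \<alpha> else 0) = ?rhs v"
    proof cases
      case 1
      then show ?thesis using ui AB uu' c12
        by (simp add: binary_measurement_def pair_proj_def ket_sum_def ket_def fun_upd_idem_iff)
    next
      case 2
      then have "v(i := u i) = u" by simp
      then show ?thesis using 2 ui AB uu' c12
        by (simp add: binary_measurement_def pair_proj_def ket_sum_def ket_def fun_upd_idem_iff)
    next
      case 3
      then have "v i \<noteq> A" "v i \<noteq> B" using ui by (metis fun_upd_triv, metis fun_upd_upd fun_upd_triv)
      then show ?thesis using 3 ui AB
        by (simp add: binary_measurement_def pair_proj_def ket_sum_def ket_def fun_upd_idem_iff)
    next
      case 4
      then have "v \<noteq> u" "v \<noteq> ?u'" using ui by auto
      then show ?thesis using 4 by (simp add: ket_sum_def ket_def)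
    qed
  qed
  finally show ?thesis .
qed

lemma norm2_nonneg: "norm2 \<psi> \<ge> 0"
  unfolding norm2_def by (rule sum_nonneg) simp

lemma norm2_eq_sum:
  assumes "finite S" "{u. \<psi> u \<noteq> 0} \<subseteq> S"
  shows "norm2 \<psi> = (\<Sum>u\<in>S. (cmod (\<psi> u))\<^sup>2)"
  unfolding norm2_def using assms by (intro sum.mono_neutral_left) auto

lemma norm2_zero [simp]: "norm2 (\<lambda>_. 0) = 0"
  unfolding norm2_def by simp

lemma norm2_ket [simp]: "norm2 (ket \<alpha> u) = (cmod \<alpha>)\<^sup>2"
  by (subst norm2_eq_sum[of "{u}"]) (auto simp: ket_def)

lemma norm2_ket_sum:
  assumes "u \<noteq> u'"
  shows "norm2 (ket_sum \<alpha> u \<beta> u') = (cmod \<alpha>)\<^sup>2 + (cmod \<beta>)\<^sup>2"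
  using assms by (subst norm2_eq_sum[of "{u, u'}"]) (auto simp: ket_sum_def ket_def)

lemma init_tape_map_Inl: "init_tape (Inl b) (map Inl x) = Inl \<circ> init_tape b x"
  unfolding init_tape_def by (auto simp: fun_eq_iff)

lemma trim_comp_Inl: "trim (Inl b) (Inl \<circ> t) = map Inl (trim b t)"
  unfolding trim_def by (simp add: Let_def)

lemma comp_Inl_upd: "Inl \<circ> f(h := b) = (Inl \<circ> f)(h := Inl b)"
  by (auto simp: fun_eq_iff)

section \<open>Runs of a deterministic machine\<close>

locale det_tm =
  fixes M :: "('s, 'a) tm"
  assumes wf: "wf_tm M"
begin

lemma finite_states: "finite (tm_states M)"
  and finite_alpha: "finite (tm_alpha M)"
  and blank_in_alpha: "tm_blank M \<in> tm_alpha M"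
  and start_in_states: "tm_start M \<in> tm_states M"
  using wf by (simp_all add: wf_tm_def)

lemma delta_closed:
  assumes "q \<in> tm_states M" "a \<in> tm_alpha M" "tm_delta M q a = (p, b, D)"
  shows "p \<in> St ` tm_states M \<union> {Yes, No, Halt}" "b \<in> tm_alpha M"
proof -
  have "case tm_delta M q a of (p, b, D) \<Rightarrow> p \<in> St ` tm_states M \<union> {Yes, No, Halt} \<and> b \<in> tm_alpha M"
    using wf assms(1,2) unfolding wf_tm_def by (elim conjE) (drule bspec, assumption)+
  then show "p \<in> St ` tm_states M \<union> {Yes, No, Halt}" "b \<in> tm_alpha M"
    using assms(3) by simp_all
qed

definition state_at :: "'a list \<Rightarrow> nat \<Rightarrow> 's st" where
  "state_at x k = fst (tm_conf M x k)"

definition tape_at :: "'a list \<Rightarrow> nat \<Rightarrow> int \<Rightarrow> 'a" where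
  "tape_at x k = fst (snd (tm_conf M x k))"

definition head_at :: "'a list \<Rightarrow> nat \<Rightarrow> int" where
  "head_at x k = snd (snd (tm_conf M x k))"

definition halt_time :: "'a list \<Rightarrow> nat" where
  "halt_time x = (LEAST n. halted (state_at x n))"

lemma tm_conf_eq: "tm_conf M x k = (state_at x k, tape_at x k, head_at x k)"
  by (simp add: state_at_def tape_at_def head_at_def)

lemma conf_at_0 [simp]: "state_at x 0 = St (tm_start M)" "head_at x 0 = 0"
  by (simp_all add: state_at_def head_at_def tm_conf_def)

lemma tape_at_0: "tape_at x 0 = init_tape (tm_blank M) x"
  by (simp add: tape_at_def tm_conf_def)

lemma tm_conf_Suc: "tm_conf M x (Suc k) = tm_step M (tm_conf M x k)"
  by (simp add: tm_conf_def)

lemma conf_at_Suc: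
  assumes "state_at x k = St p" "tm_delta M p (tape_at x k (head_at x k)) = (p', b, D)"
  shows "state_at x (Suc k) = p'" "tape_at x (Suc k) = (tape_at x k)(head_at x k := b)"
    "head_at x (Suc k) = head_at x k + mv D"
  using tm_conf_Suc[of x k] assms unfolding tm_conf_eq by simp_all

lemma tm_conf_Suc_halted: "halted (state_at x k) \<Longrightarrow> tm_conf M x (Suc k) = tm_conf M x k"
  using tm_conf_Suc[of x k] unfolding tm_conf_eq by (cases "state_at x k") (simp_all add: halted_def)

lemma tm_conf_halted:
  assumes "halted (state_at x k)" "k \<le> k'"
  shows "tm_conf M x k' = tm_conf M x k"
  using assms(2)
proof (induction k' rule: dec_induct)
  case (step n)
  then have "halted (state_at x n)" using assms(1) by (simp add: state_at_def)
  then show ?case using step.IH by (simp add: tm_conf_Suc_halted)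
qed simp

lemma init_tape_in_alpha:
  assumes "valid_input M x"
  shows "init_tape (tm_blank M) x i \<in> tm_alpha M"
proof (cases "1 \<le> i \<and> i \<le> int (length x)")
  case True
  then have "x ! nat (i - 1) \<in> set x" by (intro nth_mem) linarith
  then show ?thesis using True assms unfolding init_tape_def valid_input_def by auto
qed (use blank_in_alpha in \<open>auto simp: init_tape_def\<close>)

lemma reachable_conf:
  assumes "valid_input M x"
  shows "(\<forall>p. state_at x k = St p \<longrightarrow> p \<in> tm_states M) \<and> (\<forall>i. tape_at x k i \<in> tm_alpha M)"
proof (induction k)
  case 0
  then show ?case using start_in_states init_tape_in_alpha[OF assms] by (simp add: tape_at_0)
next
  case (Suc k)
  show ?case
  proof (cases "halted (state_at x k)")
    case True
    then show ?thesis using Suc tm_conf_Suc_halted[OF True] by (simp add: state_at_def tape_at_def)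
  next
    case False
    then obtain p where St: "state_at x k = St p" by (auto simp: halted_def)
    obtain p' b D where d: "tm_delta M p (tape_at x k (head_at x k)) = (p', b, D)"
      by (metis prod_cases3)
    then show ?thesis
      using Suc St delta_closed[OF _ _ d] conf_at_Suc[OF St d] by auto
  qed
qed

lemma reachable_state: "valid_input M x \<Longrightarrow> state_at x k = St p \<Longrightarrow> p \<in> tm_states M"
  using reachable_conf by blast

lemma reachable_symbol: "valid_input M x \<Longrightarrow> tape_at x k i \<in> tm_alpha M"
  using reachable_conf by blast

lemma halted_halt_time: "\<exists>n. halted (state_at x n) \<Longrightarrow> halted (state_at x (halt_time x))"
  unfolding halt_time_def by (rule LeastI_ex)

lemma halt_time_le: "halted (state_at x n) \<Longrightarrow> halt_time x \<le> n"
  unfolding halt_time_def by (rule Least_le)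

lemma less_halt_time:
  assumes "\<exists>n. halted (state_at x n)" "\<not> halted (state_at x k)"
  shows "k < halt_time x"
proof (rule ccontr)
  assume "\<not> k < halt_time x"
  then have "tm_conf M x k = tm_conf M x (halt_time x)"
    using tm_conf_halted[OF halted_halt_time[OF assms(1)], of k] by simp
  then have "state_at x k = state_at x (halt_time x)" by (simp add: state_at_def)
  then show False using assms(2) halted_halt_time[OF assms(1)] by simp
qed

lemma tm_output_halted:
  assumes "halted (state_at x k)"
  shows "tm_output M x = (case state_at x k of Yes \<Rightarrow> OYes | No \<Rightarrow> ONo
    | _ \<Rightarrow> OTape (trim (tm_blank M) (tape_at x k)))"
proof -
  have "tm_conf M x (halt_time x) = tm_conf M x k"
    using assms by (intro tm_conf_halted[symmetric] halted_halt_time halt_time_le) auto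
  moreover have "(LEAST n. halted (fst (tm_conf M x n))) = halt_time x"
    by (simp add: halt_time_def state_at_def)
  ultimately show ?thesis unfolding tm_output_def by (simp add: tm_conf_eq)
qed

end

section \<open>The simulating machine\<close>

text \<open>Phases of the simulation of a step of M in state p that writes b over a:
  in Read p the last outcome is the code of the scanned symbol; in Collapse p a the cell has
  just been projected onto or off |a> + |b>; in Check p a it has then been measured in the
  computational basis, and the outcome tells whether b has been written.\<close>
datatype ('s, 'a) phase = Init | Read 's | Collapse 's 'a | Check 's 'a

definition phases :: "('s, 'a) tm \<Rightarrow> ('s, 'a) phase set" where
  "phases M = insert Init (Read ` tm_states M \<union> case_prod Collapse ` (tm_states M \<times> tm_alpha M)
      \<union> case_prod Check ` (tm_states M \<times> tm_alpha M))"

lemma (in det_tm) finite_phases: "finite (phases M)"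
  using finite_states finite_alpha unfolding phases_def by simp

type_synonym 'q config = "(nat st \<times> nat \<times> int) \<times> ((int \<Rightarrow> 'q) \<Rightarrow> complex)"

locale mqtm_simulation = det_tm M for M :: "('s, 'a) tm" +
  fixes sym :: "'a \<Rightarrow> nat" and enc :: "('s, 'a) phase \<Rightarrow> nat"
  assumes sym_inj: "inj_on sym (tm_alpha M)" and enc_inj: "inj_on enc (phases M)"
begin

definition SQ :: "('a + nat) set" where
  "SQ = Inl ` tm_alpha M"

text \<open>Outcomes 0 and 1 belong to the blank test, 2 and 3 to the write measurements, and the
  codes of tape symbols start at 4.\<close>
definition sym_code :: "'a \<Rightarrow> nat" where
  "sym_code a = 4 + sym a"

definition SC :: "nat set" where
  "SC = {0, 1, 2, 3} \<union> sym_code ` tm_alpha M"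

definition decode_sym :: "nat \<Rightarrow> 'a" where
  "decode_sym = inv_into (tm_alpha M) sym_code"

definition decode_phase :: "nat \<Rightarrow> ('s, 'a) phase" where
  "decode_phase = inv_into (phases M) enc"

definition read_meas :: "nat \<Rightarrow> ('a + nat) mat" where
  "read_meas = basis_measurement SQ (case_sum sym_code (\<lambda>_. 0))"

definition write_meas :: "'a \<Rightarrow> 'a \<Rightarrow> nat \<Rightarrow> ('a + nat) mat" where
  "write_meas a b = binary_measurement SQ 2 3 (pair_proj (Inl a) (Inl b))"

definition blank_meas :: "nat \<Rightarrow> ('a + nat) mat" where
  "blank_meas = binary_measurement SQ 0 1 (ket_proj (Inl (tm_blank M)))"

definition adm :: "(nat \<Rightarrow> ('a + nat) mat) set" where
  "adm = {blank_meas, read_meas} \<union> case_prod write_meas ` {(a, b) \<in> tm_alpha M \<times> tm_alpha M. a \<noteq> b}"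
  \<comment> \<open>the blank test has to be admissible, but the simulation never applies it\<close>

fun lift_state :: "'s st \<Rightarrow> nat st" where
  "lift_state (St p) = St (enc (Read p))"
| "lift_state Yes = Yes"
| "lift_state No = No"
| "lift_state Halt = Halt"

fun sim_delta :: "('s, 'a) phase \<Rightarrow> nat \<Rightarrow> nat st \<times> dir \<times> (nat \<Rightarrow> ('a + nat) mat)" where
  "sim_delta Init \<tau> = (St (enc (Read (tm_start M))), Stay, read_meas)"
| "sim_delta (Read p) \<tau> = (if \<tau> \<in> sym_code ` tm_alpha M then
      (case tm_delta M p (decode_sym \<tau>) of (p', b, D) \<Rightarrow>
        if b = decode_sym \<tau> then (lift_state p', D, read_meas)
        else (St (enc (Collapse p (decode_sym \<tau>))), Stay, write_meas (decode_sym \<tau>) b))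
     else (Halt, Stay, read_meas))" \<comment> \<open>unreachable: read outcomes are symbol codes\<close>
| "sim_delta (Collapse p a) \<tau> = (St (enc (Check p a)), Stay, read_meas)"
| "sim_delta (Check p a) \<tau> = (case tm_delta M p a of (p', b, D) \<Rightarrow>
      if \<tau> = sym_code a \<and> b \<noteq> a then (St (enc (Collapse p a)), Stay, write_meas a b)
      else (lift_state p', D, read_meas))"

definition MQ :: "('a + nat) cqtm" where
  "MQ = \<lparr>cq_states = enc ` phases M, cq_calpha = SC, cq_cblank = 0, cq_cblankbar = 1,
     cq_qalpha = SQ, cq_qblank = Inl (tm_blank M), cq_adm = adm, cq_start = enc Init,
     cq_delta = (\<lambda>n \<tau>. sim_delta (decode_phase n) \<tau>)\<rparr>"

lemma MQ_simps [simp]: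
  "cq_states MQ = enc ` phases M" "cq_calpha MQ = SC" "cq_cblank MQ = 0" "cq_cblankbar MQ = 1"
  "cq_qalpha MQ = SQ" "cq_qblank MQ = Inl (tm_blank M)" "cq_adm MQ = adm" "cq_start MQ = enc Init"
  "cq_delta MQ = (\<lambda>n \<tau>. sim_delta (decode_phase n) \<tau>)"
  by (simp_all add: MQ_def)

lemma phases_simps [simp]:
  "Init \<in> phases M" "Read p \<in> phases M \<longleftrightarrow> p \<in> tm_states M"
  "Collapse p a \<in> phases M \<longleftrightarrow> p \<in> tm_states M \<and> a \<in> tm_alpha M"
  "Check p a \<in> phases M \<longleftrightarrow> p \<in> tm_states M \<and> a \<in> tm_alpha M"
  unfolding phases_def by auto

lemma decode_phase_enc [simp]: "\<phi> \<in> phases M \<Longrightarrow> decode_phase (enc \<phi>) = \<phi>"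
  unfolding decode_phase_def using enc_inj by simp

lemma inj_on_sym_code: "inj_on sym_code (tm_alpha M)"
  using sym_inj unfolding sym_code_def inj_on_def by simp

lemma sym_code_eq_iff:
  "a \<in> tm_alpha M \<Longrightarrow> b \<in> tm_alpha M \<Longrightarrow> sym_code a = sym_code b \<longleftrightarrow> a = b"
  using inj_on_sym_code by (rule inj_on_eq_iff)

lemma decode_sym_code [simp]: "a \<in> tm_alpha M \<Longrightarrow> decode_sym (sym_code a) = a"
  unfolding decode_sym_def using inj_on_sym_code by simp

lemma finite_SQ: "finite SQ"
  unfolding SQ_def using finite_alpha by simp

lemma finite_SC: "finite SC"
  unfolding SC_def using finite_alpha by simp

lemma sym_code_in_SC: "a \<in> tm_alpha M \<Longrightarrow> sym_code a \<in> SC"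
  unfolding SC_def by simp

lemma Inl_in_SQ: "Inl a \<in> SQ \<longleftrightarrow> a \<in> tm_alpha M"
  unfolding SQ_def by auto

lemma read_meas_projective: "projective SC SQ read_meas"
  unfolding read_meas_def using finite_SQ finite_SC
  by (intro basis_measurement_projective) (auto simp: SQ_def SC_def)

lemma write_meas_projective:
  "a \<in> tm_alpha M \<Longrightarrow> b \<in> tm_alpha M \<Longrightarrow> a \<noteq> b \<Longrightarrow> projective SC SQ (write_meas a b)"
  unfolding write_meas_def using finite_SQ finite_SC
  by (intro binary_measurement_projective orth_projector_pair_proj) (auto simp: SC_def Inl_in_SQ)

lemma blank_meas_projective: "projective SC SQ blank_meas"
  unfolding blank_meas_def using finite_SQ finite_SC blank_in_alpha
  by (intro binary_measurement_projective orth_projector_ket_proj) (auto simp: SC_def Inl_in_SQ)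

lemma adm_projective: "F \<in> adm \<Longrightarrow> projective SC SQ F"
  unfolding adm_def using read_meas_projective write_meas_projective blank_meas_projective by auto

lemma blank_test_MQ: "blank_test MQ = blank_meas"
  unfolding blank_test_def blank_meas_def binary_measurement_def ket_proj_def by (intro ext) auto

lemma lift_state_closed:
  "p \<in> St ` tm_states M \<union> {Yes, No, Halt} \<Longrightarrow> lift_state p \<in> St ` enc ` phases M \<union> {Yes, No, Halt}"
  by auto

lemma halted_lift_state [simp]: "halted (lift_state p) \<longleftrightarrow> halted p"
  by (cases p) (auto simp: halted_def)

lemma sim_delta_closed:
  assumes "\<phi> \<in> phases M" "sim_delta \<phi> \<tau> = (q, E, F)"
  shows "q \<in> St ` enc ` phases M \<union> {Yes, No, Halt} \<and> F \<in> adm"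
proof (cases \<phi>)
  case (Read p)
  show ?thesis
  proof (cases "\<tau> \<in> sym_code ` tm_alpha M")
    case True
    then obtain a where a: "a \<in> tm_alpha M" "\<tau> = sym_code a" by auto
    obtain p' b D where d: "tm_delta M p a = (p', b, D)" by (metis prod_cases3)
    then show ?thesis
      using Read assms a delta_closed[OF _ a(1) d] lift_state_closed[of p'] by (auto simp: adm_def split: if_splits)
  qed (use Read assms in \<open>auto simp: adm_def\<close>)
next
  case (Check p a)
  obtain p' b D where d: "tm_delta M p a = (p', b, D)" by (metis prod_cases3)
  then show ?thesis
    using Check assms delta_closed[OF _ _ d] lift_state_closed[of p'] by (auto simp: adm_def split: if_splits)
qed (use assms start_in_states in \<open>auto simp: adm_def\<close>)

lemma is_mqtm_MQ: "is_mqtm MQ"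
  unfolding is_mqtm_def wf_cqtm_def
proof (intro conjI ballI)
  have "finite {(a, b) \<in> tm_alpha M \<times> tm_alpha M. a \<noteq> b}"
    using finite_alpha by (auto intro: finite_subset[of _ "tm_alpha M \<times> tm_alpha M"])
  then show "finite (cq_adm MQ)"
    unfolding MQ_simps adm_def by blast
  show "projective (cq_calpha MQ) (cq_qalpha MQ) F" "admissible (cq_calpha MQ) (cq_qalpha MQ) F"
    if "F \<in> cq_adm MQ" for F
    using that adm_projective projective_imp_admissible by auto
  show "case cq_delta MQ q \<tau> of (p, D, F) \<Rightarrow> p \<in> St ` cq_states MQ \<union> {Yes, No, Halt} \<and> F \<in> cq_adm MQ"
    if q: "q \<in> cq_states MQ" for q \<tau>
  proof -
    obtain \<phi> where \<phi>: "\<phi> \<in> phases M" "q = enc \<phi>" using q by auto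
    obtain p D F where "sim_delta \<phi> \<tau> = (p, D, F)" by (metis prod_cases3)
    then show ?thesis using \<phi> sim_delta_closed[OF \<phi>(1)] by simp
  qed
qed (use finite_phases finite_SQ finite_SC blank_in_alpha blank_test_MQ in \<open>auto simp: SC_def SQ_def adm_def\<close>)

end

section \<open>The simulation invariant and the potential\<close>

context mqtm_simulation
begin

fun sim_step :: "('a + nat) config \<Rightarrow> nat \<Rightarrow> ('a + nat) config" where
  "sim_step ((q, \<tau>, h), \<psi>) c = (case q of
      St n \<Rightarrow> (case sim_delta (decode_phase n) \<tau> of (p, D, F) \<Rightarrow>
        ((p, c, h + mv D), apply_at SQ (F c) (h + mv D) \<psi>))
    | _ \<Rightarrow> ((q, \<tau>, h), \<psi>))"

lemma cq_run_MQ_Cons: "cq_run MQ xs (c # w) = sim_step (cq_run MQ xs w) c"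
proof -
  obtain q \<tau> h \<psi> where "cq_run MQ xs w = ((q, \<tau>, h), \<psi>)" by (metis prod.collapse)
  then show ?thesis by (cases q) simp_all
qed

lemma sim_step_halted: "halted q \<Longrightarrow> sim_step ((q, \<tau>, h), \<psi>) c = ((q, \<tau>, h), \<psi>)"
  by (cases q) (auto simp: halted_def)

lemma sim_step_zero: "snd (sim_step ((q, \<tau>, h), \<lambda>_. 0) c) = (\<lambda>_. 0)"
  by (cases q) (auto simp: apply_at_zero split: prod.split)

fun completes :: "('a + nat) config \<Rightarrow> nat" where
  "completes ((St n, \<tau>, h), \<psi>) = (case decode_phase n of
      Read p \<Rightarrow> (if \<tau> \<in> sym_code ` tm_alpha M \<and> fst (snd (tm_delta M p (decode_sym \<tau>))) = decode_sym \<tau>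
                 then 1 else 0)
    | Check p a \<Rightarrow> (if \<tau> = sym_code a \<and> fst (snd (tm_delta M p a)) \<noteq> a then 0 else 1)
    | _ \<Rightarrow> 0)"
| "completes _ = 0"

fun sim_count :: "'a list \<Rightarrow> nat list \<Rightarrow> nat" where
  "sim_count x [] = 0"
| "sim_count x (c # w) = sim_count x w + completes (cq_run MQ (map Inl x) w)"

text \<open>A step of M costs 5 steps in expectation: a round of writing (projection, then
  basis measurement) succeeds with probability 1/2, hence 4 steps, and one step moves the head.\<close>
fun potential :: "nat \<Rightarrow> nat \<Rightarrow> nat st \<Rightarrow> nat \<Rightarrow> nat" where
  "potential T k (St n) \<tau> = (case decode_phase n of
      Init \<Rightarrow> 1 + 5 * T
    | Read p \<Rightarrow> 5 * (T - k)
    | Collapse p a \<Rightarrow> 5 * (T - k) - 1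
    | Check p a \<Rightarrow> (if \<tau> = sym_code a then 5 * (T - k) else 5 * (T - k) - 4))"
| "potential T k _ \<tau> = 0"

fun weighted_potential :: "nat \<Rightarrow> nat \<Rightarrow> ('a + nat) config \<Rightarrow> real" where
  "weighted_potential T k ((q, \<tau>, h), \<psi>) = norm2 \<psi> * real (potential T k q \<tau>)"

fun running_weight :: "('a + nat) config \<Rightarrow> real" where
  "running_weight ((q, \<tau>, h), \<psi>) = (if halted q then 0 else norm2 \<psi>)"

abbreviation qtape :: "'a list \<Rightarrow> nat \<Rightarrow> int \<Rightarrow> 'a + nat" where
  "qtape x k \<equiv> Inl \<circ> tape_at x k"

inductive sim_inv :: "'a list \<Rightarrow> nat \<Rightarrow> ('a + nat) config \<Rightarrow> bool" for x :: "'a list" where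
  zero: "sim_inv x k ((q, \<tau>, h), \<lambda>_. 0)"
| init: "sim_inv x 0 ((St (enc Init), \<tau>, 0), ket 1 (qtape x 0))"
| stopped: "halted (state_at x k) \<Longrightarrow>
    sim_inv x k ((lift_state (state_at x k), \<tau>, h), ket \<alpha> (qtape x k))"
| read: "state_at x k = St p \<Longrightarrow>
    sim_inv x k ((St (enc (Read p)), sym_code (tape_at x k (head_at x k)), head_at x k),
      ket \<alpha> (qtape x k))"
| collapse: "state_at x k = St p \<Longrightarrow> tape_at x k (head_at x k) = a \<Longrightarrow>
    tm_delta M p a = (p', b, D) \<Longrightarrow> b \<noteq> a \<Longrightarrow> cmod \<beta> = cmod \<alpha> \<Longrightarrow>
    sim_inv x k ((St (enc (Collapse p a)), \<tau>, head_at x k),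
      ket_sum \<alpha> (qtape x k) \<beta> (qtape x (Suc k)))"
| retry: "state_at x k = St p \<Longrightarrow> tape_at x k (head_at x k) = a \<Longrightarrow>
    tm_delta M p a = (p', b, D) \<Longrightarrow> b \<noteq> a \<Longrightarrow>
    sim_inv x k ((St (enc (Check p a)), sym_code a, head_at x k), ket \<alpha> (qtape x k))"
| written: "state_at x k = St p \<Longrightarrow> tape_at x k (head_at x k) = a \<Longrightarrow>
    tm_delta M p a = (p', b, D) \<Longrightarrow> b \<noteq> a \<Longrightarrow>
    sim_inv x k ((St (enc (Check p a)), sym_code b, head_at x k), ket \<alpha> (qtape x (Suc k)))"

definition step_descends :: "'a list \<Rightarrow> nat \<Rightarrow> ('a + nat) config \<Rightarrow> bool" where
  "step_descends x k r \<longleftrightarrow> (\<forall>c. sim_inv x (k + completes r) (sim_step r c))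
     \<and> (\<Sum>c\<in>SC. weighted_potential (halt_time x) (k + completes r) (sim_step r c)) + running_weight r
       \<le> weighted_potential (halt_time x) k r"

lemma step_move:
  fixes \<alpha> :: complex
  assumes vi: "valid_input M x" and hl: "\<exists>n. halted (state_at x n)"
    and P: "state_at x k = St p" and d: "tm_delta M p (tape_at x k (head_at x k)) = (p', b, D)"
    and \<phi>: "\<phi> \<in> phases M" "sim_delta \<phi> \<tau> = (lift_state p', D, read_meas)"
  defines "r \<equiv> ((St (enc \<phi>), \<tau>, head_at x k), ket \<alpha> (qtape x (Suc k)))"
  shows "\<forall>c. sim_inv x (Suc k) (sim_step r c)"
    and "(\<Sum>c\<in>SC. weighted_potential (halt_time x) (Suc k) (sim_step r c)) + (cmod \<alpha>)\<^sup>2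
      \<le> (cmod \<alpha>)\<^sup>2 * (5 * real (halt_time x - k) - 4)"
proof -
  let ?h = "head_at x (Suc k)"
  let ?c0 = "sym_code (tape_at x (Suc k) ?h)"
  have S: "state_at x (Suc k) = p'" "head_at x k + mv D = ?h"
    using conf_at_Suc[OF P d] by simp_all
  have "qtape x (Suc k) ?h \<in> SQ" using reachable_symbol[OF vi] by (simp add: Inl_in_SQ)
  then have step: "sim_step r c = ((lift_state p', c, ?h), if c = ?c0 then ket \<alpha> (qtape x (Suc k)) else (\<lambda>_. 0))"
    for c
    using \<phi> S(2) by (simp add: r_def read_meas_def apply_at_basis_measurement_ket finite_SQ)
  show "\<forall>c. sim_inv x (Suc k) (sim_step r c)"
  proof
    fix c
    show "sim_inv x (Suc k) (sim_step r c)"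
    proof (cases "c = ?c0")
      case True
      show ?thesis
      proof (cases p')
        case (St p'')
        then show ?thesis using True S step sim_inv.read[of x "Suc k" p'' \<alpha>] by simp
      qed (use True S step sim_inv.stopped[of x "Suc k"] in \<open>auto simp: halted_def\<close>)
    qed (simp add: step sim_inv.zero)
  qed
  have k_less: "k < halt_time x" using less_halt_time[OF hl] P by (simp add: halted_def)
  have pot: "real (potential (halt_time x) (Suc k) (lift_state p') c) \<le> 5 * real (halt_time x - k) - 5"
    for c
    using reachable_state[OF vi] S k_less by (cases p') (auto simp: of_nat_diff)
  have "(\<Sum>c\<in>SC. weighted_potential (halt_time x) (Suc k) (sim_step r c))
      = weighted_potential (halt_time x) (Suc k) (sim_step r ?c0)"
    using finite_SC reachable_symbol[OF vi] by (intro sum_eq_single) (auto simp: step sym_code_in_SC)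
  also have "\<dots> = (cmod \<alpha>)\<^sup>2 * real (potential (halt_time x) (Suc k) (lift_state p') ?c0)"
    by (simp add: step)
  also have "\<dots> \<le> (cmod \<alpha>)\<^sup>2 * (5 * real (halt_time x - k) - 5)"
    using pot by (intro mult_left_mono) auto
  finally show "(\<Sum>c\<in>SC. weighted_potential (halt_time x) (Suc k) (sim_step r c)) + (cmod \<alpha>)\<^sup>2
      \<le> (cmod \<alpha>)\<^sup>2 * (5 * real (halt_time x - k) - 4)"
    by (simp add: algebra_simps)
qed

lemma step_write:
  fixes \<alpha> :: complex
  assumes vi: "valid_input M x" and hl: "\<exists>n. halted (state_at x n)"
    and P: "state_at x k = St p" and a: "tape_at x k (head_at x k) = a"
    and d: "tm_delta M p a = (p', b, D)" and ba: "b \<noteq> a"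
    and \<phi>: "\<phi> \<in> phases M" "sim_delta \<phi> \<tau> = (St (enc (Collapse p a)), Stay, write_meas a b)"
  defines "r \<equiv> ((St (enc \<phi>), \<tau>, head_at x k), ket \<alpha> (qtape x k))"
  shows "\<forall>c. sim_inv x k (sim_step r c)"
    and "(\<Sum>c\<in>SC. weighted_potential (halt_time x) k (sim_step r c)) + (cmod \<alpha>)\<^sup>2
      \<le> (cmod \<alpha>)\<^sup>2 * (5 * real (halt_time x - k))"
proof -
  let ?h = "head_at x k"
  have p_in: "p \<in> tm_states M" using reachable_state[OF vi P] .
  have a_in: "a \<in> tm_alpha M" using reachable_symbol[OF vi] a by blast
  have b_in: "b \<in> tm_alpha M" using delta_closed[OF p_in a_in d] by simp
  have u': "qtape x (Suc k) = (qtape x k)(?h := Inl b)"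
    using conf_at_Suc(2)[OF P d[folded a]] by (simp add: comp_Inl_upd)
  have uu': "qtape x k \<noteq> qtape x (Suc k)"
    using a ba u' by (metis comp_apply fun_upd_same sum.inject(1))
  have step: "sim_step r c = ((St (enc (Collapse p a)), c, ?h),
      if c = 2 then ket_sum (\<alpha>/2) (qtape x k) (\<alpha>/2) (qtape x (Suc k))
      else if c = 3 then ket_sum (\<alpha>/2) (qtape x k) (-(\<alpha>/2)) (qtape x (Suc k))
      else (\<lambda>_. 0))" for c
    using \<phi> a a_in b_in ba apply_at_pair_measurement_ket[OF finite_SQ, of "Inl a" "Inl b" 2 3 "qtape x k" ?h c \<alpha>]
    by (simp add: r_def write_meas_def u' Inl_in_SQ)
  show "\<forall>c. sim_inv x k (sim_step r c)"
    using sim_inv.collapse[OF P a d ba] sim_inv.zero by (simp add: step)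
  have k_less: "k < halt_time x" using less_halt_time[OF hl] P by (simp add: halted_def)
  have n2: "norm2 (ket_sum (\<alpha>/2) (qtape x k) \<beta> (qtape x (Suc k))) = (cmod \<alpha>)\<^sup>2 / 2"
    if "cmod \<beta> = cmod \<alpha> / 2" for \<beta>
    unfolding norm2_ket_sum[OF uu'] that by (simp add: norm_divide power_divide)
  have "(\<Sum>c\<in>SC. weighted_potential (halt_time x) k (sim_step r c))
      = weighted_potential (halt_time x) k (sim_step r 2) + weighted_potential (halt_time x) k (sim_step r 3)"
    using finite_SC by (intro sum_eq_pair) (auto simp: SC_def step)
  also have "\<dots> = (cmod \<alpha>)\<^sup>2 * (5 * real (halt_time x - k) - 1)"
    using p_in a_in k_less by (simp add: step n2 of_nat_diff field_simps)
  finally show "(\<Sum>c\<in>SC. weighted_potential (halt_time x) k (sim_step r c)) + (cmod \<alpha>)\<^sup>2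
      \<le> (cmod \<alpha>)\<^sup>2 * (5 * real (halt_time x - k))"
    by (simp add: algebra_simps)
qed

lemma step_collapse:
  fixes \<alpha> \<beta> :: complex and \<tau> :: nat
  assumes vi: "valid_input M x" and hl: "\<exists>n. halted (state_at x n)"
    and P: "state_at x k = St p" and a: "tape_at x k (head_at x k) = a"
    and d: "tm_delta M p a = (p', b, D)" and ba: "b \<noteq> a" and \<beta>: "cmod \<beta> = cmod \<alpha>"
  defines "r \<equiv> ((St (enc (Collapse p a)), \<tau>, head_at x k), ket_sum \<alpha> (qtape x k) \<beta> (qtape x (Suc k)))"
  shows "\<forall>c. sim_inv x k (sim_step r c)"
    and "(\<Sum>c\<in>SC. weighted_potential (halt_time x) k (sim_step r c)) + running_weight r
      = weighted_potential (halt_time x) k r"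
proof -
  let ?h = "head_at x k"
  have p_in: "p \<in> tm_states M" using reachable_state[OF vi P] .
  have a_in: "a \<in> tm_alpha M" using reachable_symbol[OF vi] a by blast
  have b_in: "b \<in> tm_alpha M" using delta_closed[OF p_in a_in d] by simp
  have ab: "sym_code a \<noteq> sym_code b" using sym_code_eq_iff[OF a_in b_in] ba by simp
  have tape': "tape_at x (Suc k) ?h = b" using conf_at_Suc(2)[OF P d[folded a]] by simp
  have uu': "qtape x k \<noteq> qtape x (Suc k)"
    using a ba tape' by (metis comp_apply sum.inject(1))
  have step: "sim_step r c = ((St (enc (Check p a)), c, ?h),
      if c = sym_code a then ket \<alpha> (qtape x k)
      else if c = sym_code b then ket \<beta> (qtape x (Suc k)) else (\<lambda>_. 0))" for c
    using p_in a_in b_in ab a tape'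
      apply_at_basis_measurement_ket_sum[OF finite_SQ, of "qtape x k" ?h "qtape x (Suc k)"]
    by (simp add: r_def read_meas_def Inl_in_SQ)
  show "\<forall>c. sim_inv x k (sim_step r c)"
    using sim_inv.retry[OF P a d ba] sim_inv.written[OF P a d ba] sim_inv.zero by (simp add: step)
  have k_less: "k < halt_time x" using less_halt_time[OF hl] P by (simp add: halted_def)
  have "(\<Sum>c\<in>SC. weighted_potential (halt_time x) k (sim_step r c))
      = weighted_potential (halt_time x) k (sim_step r (sym_code a))
        + weighted_potential (halt_time x) k (sim_step r (sym_code b))"
    using finite_SC a_in b_in ab by (intro sum_eq_pair) (auto simp: sym_code_in_SC step)
  also have "\<dots> = (cmod \<alpha>)\<^sup>2 * (10 * real (halt_time x - k) - 4)"
    using p_in a_in ab k_less \<beta> by (simp add: step of_nat_diff algebra_simps)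
  finally have sum: "(\<Sum>c\<in>SC. weighted_potential (halt_time x) k (sim_step r c))
      = (cmod \<alpha>)\<^sup>2 * (10 * real (halt_time x - k) - 4)" .
  have norm: "norm2 (snd r) = 2 * (cmod \<alpha>)\<^sup>2"
    using \<beta> by (simp add: r_def norm2_ket_sum[OF uu'])
  have "weighted_potential (halt_time x) k r = 2 * (cmod \<alpha>)\<^sup>2 * (5 * real (halt_time x - k) - 1)"
    using norm p_in a_in k_less by (simp add: r_def of_nat_diff)
  moreover have "running_weight r = 2 * (cmod \<alpha>)\<^sup>2"
    using norm by (simp add: r_def halted_def)
  ultimately show "(\<Sum>c\<in>SC. weighted_potential (halt_time x) k (sim_step r c)) + running_weight r
      = weighted_potential (halt_time x) k r"
    unfolding sum by (simp add: algebra_simps)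
qed

lemma step_from_init: "step_descends x 0 ((St (enc Init), \<tau>, 0), ket 1 (qtape x 0))"
  (is "step_descends x 0 ?r")
proof -
  let ?c0 = "sym_code (tm_blank M)"
  have "qtape x 0 0 = Inl (tm_blank M)" by (simp add: tape_at_0 init_tape_def)
  then have step: "sim_step ?r c = ((St (enc (Read (tm_start M))), c, 0),
      if c = ?c0 then ket 1 (qtape x 0) else (\<lambda>_. 0))" for c
    using blank_in_alpha
    by (simp add: read_meas_def apply_at_basis_measurement_ket finite_SQ Inl_in_SQ)
  have "tape_at x 0 (head_at x 0) = tm_blank M" by (simp add: tape_at_0 init_tape_def)
  then have inv: "sim_inv x 0 (sim_step ?r c)" for c
    unfolding step using sim_inv.read[of x 0 "tm_start M" 1] sim_inv.zero by simp
  have "(\<Sum>c\<in>SC. weighted_potential (halt_time x) 0 (sim_step ?r c))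
      = weighted_potential (halt_time x) 0 (sim_step ?r ?c0)"
    using finite_SC blank_in_alpha
    by (intro sum_eq_single) (auto simp: step sym_code_in_SC simp del: sim_step.simps)
  also have "\<dots> = 5 * real (halt_time x)"
    using start_in_states by (simp add: step del: sim_step.simps)
  finally show ?thesis
    using inv by (simp add: step_descends_def halted_def)
qed

lemma step_from_read:
  fixes \<alpha> :: complex
  assumes vi: "valid_input M x" and hl: "\<exists>n. halted (state_at x n)" and P: "state_at x k = St p"
  shows "step_descends x k
    ((St (enc (Read p)), sym_code (tape_at x k (head_at x k)), head_at x k), ket \<alpha> (qtape x k))"
    (is "step_descends x k ((?q, ?\<tau>, ?h), ?\<psi>)")
proof -
  define a where "a = tape_at x k ?h"
  obtain p' b D where d: "tm_delta M p a = (p', b, D)" by (metis prod_cases3)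
  have p_in: "p \<in> tm_states M" using reachable_state[OF vi P] .
  have a_in: "a \<in> tm_alpha M" using reachable_symbol[OF vi] a_def by blast
  have k_less: "k < halt_time x" using less_halt_time[OF hl] P by (simp add: halted_def)
  have wp: "weighted_potential (halt_time x) k ((?q, ?\<tau>, ?h), ?\<psi>) = (cmod \<alpha>)\<^sup>2 * (5 * real (halt_time x - k))"
    using p_in by simp
  show ?thesis
  proof (cases "b = a")
    case True
    have "tape_at x (Suc k) = tape_at x k"
      using conf_at_Suc(2)[OF P d[unfolded a_def]] True a_def by simp
    moreover have "sim_delta (Read p) ?\<tau> = (lift_state p', D, read_meas)"
      using a_in d True by (simp add: a_def[symmetric])
    moreover have "completes ((?q, ?\<tau>, ?h), ?\<psi>) = 1"
      using p_in a_in d True by (simp add: a_def[symmetric])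
    moreover have "(cmod \<alpha>)\<^sup>2 * (5 * real (halt_time x - k) - 4) \<le> (cmod \<alpha>)\<^sup>2 * (5 * real (halt_time x - k))"
      by (simp add: mult_left_mono)
    ultimately show ?thesis
      using step_move[OF vi hl P d[unfolded a_def], of "Read p" ?\<tau> \<alpha>] p_in wp
      by (simp add: step_descends_def halted_def)
  next
    case False
    have "sim_delta (Read p) ?\<tau> = (St (enc (Collapse p a)), Stay, write_meas a b)"
      using a_in d False by (simp add: a_def[symmetric])
    moreover have "completes ((?q, ?\<tau>, ?h), ?\<psi>) = 0"
      using p_in a_in d False by (simp add: a_def[symmetric])
    ultimately show ?thesis
      using step_write[OF vi hl P a_def[symmetric] d False, of "Read p" ?\<tau> \<alpha>] p_in wp
      by (simp add: step_descends_def halted_def)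
  qed
qed

lemma step_from_retry:
  fixes \<alpha> :: complex
  assumes vi: "valid_input M x" and hl: "\<exists>n. halted (state_at x n)"
    and P: "state_at x k = St p" and a: "tape_at x k (head_at x k) = a"
    and d: "tm_delta M p a = (p', b, D)" and ba: "b \<noteq> a"
  shows "step_descends x k ((St (enc (Check p a)), sym_code a, head_at x k), ket \<alpha> (qtape x k))"
proof -
  have p_in: "p \<in> tm_states M" "a \<in> tm_alpha M"
    using reachable_state[OF vi P] reachable_symbol[OF vi] a by blast+
  have \<delta>: "sim_delta (Check p a) (sym_code a) = (St (enc (Collapse p a)), Stay, write_meas a b)"
    using d ba by simp
  show ?thesis
    using step_write[where \<alpha> = \<alpha>, OF vi hl P a d ba _ \<delta>] p_in d ba
    by (simp add: step_descends_def halted_def)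
qed

lemma step_from_written:
  fixes \<alpha> :: complex
  assumes vi: "valid_input M x" and hl: "\<exists>n. halted (state_at x n)"
    and P: "state_at x k = St p" and a: "tape_at x k (head_at x k) = a"
    and d: "tm_delta M p a = (p', b, D)" and ba: "b \<noteq> a"
  shows "step_descends x k ((St (enc (Check p a)), sym_code b, head_at x k), ket \<alpha> (qtape x (Suc k)))"
proof -
  have p_in: "p \<in> tm_states M" "a \<in> tm_alpha M"
    using reachable_state[OF vi P] reachable_symbol[OF vi] a by blast+
  then have ab: "sym_code b \<noteq> sym_code a" using sym_code_eq_iff delta_closed(2)[OF _ _ d] ba by blast
  have k_less: "k < halt_time x" using less_halt_time[OF hl] P by (simp add: halted_def)
  have \<delta>: "sim_delta (Check p a) (sym_code b) = (lift_state p', D, read_meas)"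
    using d ab by simp
  show ?thesis
    using step_move[where \<alpha> = \<alpha>, OF vi hl P _ _ \<delta>] p_in a d ab k_less
    by (simp add: step_descends_def halted_def of_nat_diff)
qed

lemma sim_inv_step_descends:
  assumes vi: "valid_input M x" and hl: "\<exists>n. halted (state_at x n)" and inv: "sim_inv x k r"
  shows "step_descends x k r"
  using inv
proof cases
  case (zero q \<tau> h)
  have "sim_inv x (k + completes r) (sim_step r c)" for c
    using sim_step_zero[of q \<tau> h c] sim_inv.zero zero by (metis prod.collapse)
  moreover have "weighted_potential T k' (sim_step r c) = 0" for T k' c
    using sim_step_zero[of q \<tau> h c] zero by (metis norm2_zero mult_zero_left prod.collapse weighted_potential.simps)
  ultimately show ?thesis using zero by (simp add: step_descends_def)
next
  case (stopped \<tau> h \<alpha>)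
  have "completes r = 0" "\<And>T k'. potential T k' (lift_state (state_at x k)) \<tau> = 0"
    using stopped by (cases "state_at x k"; simp add: halted_def)+
  moreover have "sim_step r c = r" for c
    using stopped by (simp add: sim_step_halted del: sim_step.simps)
  ultimately show ?thesis
    using stopped sim_inv.stopped[OF stopped(2)] by (simp add: step_descends_def)
next
  case (collapse p a p' b D \<beta> \<alpha> \<tau>)
  have "p \<in> tm_states M" "a \<in> tm_alpha M"
    using collapse reachable_state[OF vi] reachable_symbol[OF vi] by blast+
  then have "completes r = 0"
    using collapse by simp
  then show ?thesis
    using step_collapse[OF vi hl collapse(2-6)] collapse(1) by (simp add: step_descends_def)
next
  case (retry p a p' b D \<alpha>)
  then show ?thesis using step_from_retry[OF vi hl retry(2-5)] by simp
next
  case (written p a p' b D \<alpha>)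
  then show ?thesis using step_from_written[OF vi hl written(2-5)] by simp
qed (use step_from_init step_from_read[OF vi hl] in auto)

lemma sim_inv_run:
  assumes vi: "valid_input M x" and hl: "\<exists>n. halted (state_at x n)"
  shows "sim_inv x (sim_count x w) (cq_run MQ (map Inl x) w)"
proof (induction w)
  case Nil
  have "basis (init_tape (Inl (tm_blank M)) (map Inl x)) = ket 1 (qtape x 0)"
    by (simp add: basis_eq_ket init_tape_map_Inl tape_at_0)
  then show ?case using sim_inv.init by simp
next
  case (Cons c w)
  then show ?case
    using sim_inv_step_descends[OF vi hl Cons.IH]
    by (simp add: cq_run_MQ_Cons step_descends_def del: cq_run.simps)
qed

section \<open>Output and expected running time\<close>

lemma sim_inv_halted:
  assumes "sim_inv x k ((q, \<tau>, h), \<psi>)" "halted q" "\<psi> \<noteq> (\<lambda>_. 0)"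
  obtains \<alpha> where "q = lift_state (state_at x k)" "halted (state_at x k)" "\<psi> = ket \<alpha> (qtape x k)"
  using assms by (cases rule: sim_inv.cases) (auto simp: halted_def)

definition outcome_seqs :: "nat \<Rightarrow> nat list set" where
  "outcome_seqs t = {w. length w = t \<and> set w \<subseteq> SC}"

lemma finite_outcome_seqs: "finite (outcome_seqs t)"
  unfolding outcome_seqs_def using finite_lists_length_eq[OF finite_SC] by (simp add: conj_commute)

lemma outcome_seqs_Suc: "outcome_seqs (Suc t) = (\<lambda>(w, c). c # w) ` (outcome_seqs t \<times> SC)"
  unfolding outcome_seqs_def by (auto simp: length_Suc_conv image_iff)

definition total_potential :: "'a list \<Rightarrow> nat \<Rightarrow> real" where
  "total_potential x t = (\<Sum>w\<in>outcome_seqs t.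
     weighted_potential (halt_time x) (sim_count x w) (cq_run MQ (map Inl x) w))"

lemma running_weight_eq: "running_weight r = (if halted (fst (fst r)) then 0 else norm2 (snd r))"
  by (metis prod.collapse running_weight.simps)

lemma prob_running_MQ:
  "prob_running MQ (map Inl x) t = (\<Sum>w\<in>outcome_seqs t. running_weight (cq_run MQ (map Inl x) w))"
proof -
  let ?run = "cq_run MQ (map Inl x)"
  have "(\<Sum>w\<in>outcome_seqs t. running_weight (?run w))
      = (\<Sum>w\<in>outcome_seqs t. if \<not> halted (fst (fst (?run w))) then norm2 (snd (?run w)) else 0)"
    by (intro sum.cong) (auto simp: running_weight_eq)
  also have "\<dots> = (\<Sum>w\<in>{w \<in> outcome_seqs t. \<not> halted (fst (fst (?run w)))}. norm2 (snd (?run w)))"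
    by (simp add: sum.inter_filter[OF finite_outcome_seqs])
  finally show ?thesis
    unfolding prob_running_def outcome_seqs_def by (simp add: conj_assoc)
qed

lemma total_potential_Suc:
  assumes vi: "valid_input M x" and hl: "\<exists>n. halted (state_at x n)"
  shows "total_potential x (Suc t) + prob_running MQ (map Inl x) t \<le> total_potential x t"
proof -
  let ?run = "cq_run MQ (map Inl x)" and ?T = "halt_time x"
  have "total_potential x (Suc t)
      = (\<Sum>(w, c)\<in>outcome_seqs t \<times> SC. weighted_potential ?T (sim_count x (c # w)) (?run (c # w)))"
    unfolding total_potential_def outcome_seqs_Suc
    by (subst sum.reindex) (auto simp: inj_on_def case_prod_beta simp del: sim_count.simps cq_run.simps)
  also have "\<dots> = (\<Sum>w\<in>outcome_seqs t. \<Sum>c\<in>SC. weighted_potential ?T (sim_count x (c # w)) (?run (c # w)))"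
    by (rule sum.cartesian_product[symmetric])
  also have "\<dots> = (\<Sum>w\<in>outcome_seqs t. \<Sum>c\<in>SC.
      weighted_potential ?T (sim_count x w + completes (?run w)) (sim_step (?run w) c))"
    by (simp add: cq_run_MQ_Cons del: cq_run.simps)
  finally have "total_potential x (Suc t) + prob_running MQ (map Inl x) t
      = (\<Sum>w\<in>outcome_seqs t. (\<Sum>c\<in>SC.
          weighted_potential ?T (sim_count x w + completes (?run w)) (sim_step (?run w) c))
        + running_weight (?run w))"
    by (simp add: prob_running_MQ sum.distrib)
  also have "\<dots> \<le> total_potential x t"
    unfolding total_potential_def
    using sim_inv_step_descends[OF vi hl sim_inv_run[OF vi hl]]
    by (intro sum_mono) (simp add: step_descends_def)
  finally show ?thesis .
qed

lemma total_potential_0: "total_potential x 0 = 1 + 5 * real (halt_time x)"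
proof -
  have "outcome_seqs 0 = {[]}" unfolding outcome_seqs_def by auto
  then show ?thesis unfolding total_potential_def by (simp add: basis_eq_ket)
qed

lemma weighted_potential_nonneg: "weighted_potential T k r \<ge> 0"
  by (metis prod.collapse weighted_potential.simps norm2_nonneg of_nat_0_le_iff mult_nonneg_nonneg)

lemma expected_time_MQ:
  assumes vi: "valid_input M x" and hl: "\<exists>n. halted (state_at x n)"
  shows "expected_time MQ (map Inl x) \<le> ennreal (1 + 5 * real (halt_time x))"
proof -
  let ?P = "prob_running MQ (map Inl x)"
  have P_nonneg: "?P t \<ge> 0" for t
    unfolding prob_running_def by (intro sum_nonneg) (simp add: norm2_nonneg)
  have telescope: "(\<Sum>t<n. ?P t) + total_potential x n \<le> total_potential x 0" for n
  proof (induction n)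
    case (Suc n)
    then show ?case using total_potential_Suc[OF vi hl, of n] by simp
  qed simp
  have partial: "(\<Sum>t<n. ?P t) \<le> 1 + 5 * real (halt_time x)" for n
  proof -
    have "0 \<le> total_potential x n"
      unfolding total_potential_def by (intro sum_nonneg weighted_potential_nonneg)
    then show ?thesis using telescope[of n] total_potential_0[of x] by linarith
  qed
  have "expected_time MQ (map Inl x) = (SUP n. \<Sum>t<n. ennreal (?P t))"
    unfolding expected_time_def by (rule suminf_eq_SUP)
  also have "\<dots> \<le> ennreal (1 + 5 * real (halt_time x))"
  proof (rule SUP_least)
    fix n
    have "(\<Sum>t<n. ennreal (?P t)) = ennreal (\<Sum>t<n. ?P t)"
      using P_nonneg by (simp add: sum_ennreal)
    also have "\<dots> \<le> ennreal (1 + 5 * real (halt_time x))"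
      using partial by (rule ennreal_leI)
    finally show "(\<Sum>t<n. ennreal (?P t)) \<le> ennreal (1 + 5 * real (halt_time x))" .
  qed
  finally show ?thesis .
qed

lemma cq_outputs_MQ:
  assumes vi: "valid_input M x" and hl: "\<exists>n. halted (state_at x n)"
  shows "cq_outputs MQ (map Inl x) (map_tm_out Inl (tm_output M x))"
  unfolding cq_outputs_def
proof (intro allI impI)
  fix w
  obtain q \<tau> h \<psi> where run: "cq_run MQ (map Inl x) w = ((q, \<tau>, h), \<psi>)"
    by (metis prod.collapse)
  define k where "k = sim_count x w"
  have inv: "sim_inv x k ((q, \<tau>, h), \<psi>)" using sim_inv_run[OF vi hl, of w] run by (simp add: k_def)
  show "case cq_run MQ (map Inl x) w of ((q, \<tau>, h), \<psi>) \<Rightarrow> halted q \<and> norm2 \<psi> \<noteq> 0 \<longrightarrow>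
      (case map_tm_out Inl (tm_output M x) of OYes \<Rightarrow> q = Yes | ONo \<Rightarrow> q = No
       | OTape ys \<Rightarrow> q = Halt \<and>
          (\<exists>c u. c \<noteq> 0 \<and> \<psi> = (\<lambda>v. if v = u then c else 0) \<and> trim (cq_qblank MQ) u = ys))"
    unfolding run prod.case
  proof (intro impI, elim conjE)
    assume "halted q" "norm2 \<psi> \<noteq> 0"
    then obtain \<alpha> where q: "q = lift_state (state_at x k)" and hk: "halted (state_at x k)"
      and \<psi>: "\<psi> = ket \<alpha> (qtape x k)"
      using sim_inv_halted[OF inv] by fastforce
    have "\<alpha> \<noteq> 0" using \<open>norm2 \<psi> \<noteq> 0\<close> \<psi> by auto
    then show "case map_tm_out Inl (tm_output M x) of OYes \<Rightarrow> q = Yes | ONo \<Rightarrow> q = No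
       | OTape ys \<Rightarrow> q = Halt \<and>
          (\<exists>c u. c \<noteq> 0 \<and> \<psi> = (\<lambda>v. if v = u then c else 0) \<and> trim (cq_qblank MQ) u = ys)"
      using hk q \<psi> unfolding tm_output_halted[OF hk]
      by (cases "state_at x k")
        (auto simp: halted_def ket_def trim_comp_Inl intro!: exI[of _ \<alpha>] exI[of _ "qtape x k"])
  qed
qed

lemma expected_time_MQ_le:
  assumes "tm_runs_in_time M f" "valid_input M x"
  shows "expected_time MQ (map Inl x) \<le> ennreal (6 * real (f (length x)))"
proof -
  obtain n where n: "n \<le> f (length x)" "halted (state_at x n)"
    using assms unfolding tm_runs_in_time_def state_at_def by blast
  then have hl: "\<exists>n. halted (state_at x n)" by blast
  have "0 < halt_time x" using less_halt_time[OF hl, of 0] by (simp add: halted_def)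
  moreover have "halt_time x \<le> f (length x)" using halt_time_le[OF n(2)] n(1) by simp
  ultimately have "1 + 5 * real (halt_time x) \<le> 6 * real (f (length x))" by linarith
  then show ?thesis
    using expected_time_MQ[OF assms(2) hl] by (meson ennreal_leI order_trans)
qed

end

lemma mqtm_simulation_exists:
  fixes M :: "('s, 'a) tm"
  assumes "wf_tm M"
  obtains sym :: "'a \<Rightarrow> nat" and enc :: "('s, 'a) phase \<Rightarrow> nat"
  where "mqtm_simulation M sym enc"
proof -
  interpret det_tm M by (rule det_tm.intro) (fact assms)
  obtain sym :: "'a \<Rightarrow> nat" where "inj_on sym (tm_alpha M)"
    using finite_imp_inj_to_nat_seg[OF finite_alpha] by blast
  moreover obtain enc :: "('s, 'a) phase \<Rightarrow> nat" where "inj_on enc (phases M)"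
    using finite_imp_inj_to_nat_seg[OF finite_phases] by blast
  ultimately show ?thesis
    using that assms by (simp add: mqtm_simulation_def mqtm_simulation_axioms_def det_tm_def)
qed

theorem theorem5:
  fixes M :: "('s, 'a) tm" and f :: "nat \<Rightarrow> nat"
  assumes "wf_tm M" and "tm_runs_in_time M f"
  shows "\<exists>M' :: ('a + nat) cqtm.
           is_mqtm M'
         \<and> cq_qblank M' = Inl (tm_blank M)
         \<and> Inl ` tm_alpha M \<subseteq> cq_qalpha M'
         \<and> (\<exists>c N. \<forall>x. valid_input M x \<and> N \<le> length x \<longrightarrow>
               expected_time M' (map Inl x) \<le> ennreal (c * real (f (length x))))
         \<and> (\<forall>x. valid_input M x \<longrightarrow>
               cq_outputs M' (map Inl x) (map_tm_out Inl (tm_output M x)))"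
proof -
  obtain sym enc where "mqtm_simulation M sym enc"
    using mqtm_simulation_exists[OF assms(1)] .
  then interpret mqtm_simulation M sym enc .
  have halts: "\<exists>n. halted (state_at x n)" if "valid_input M x" for x
    using assms(2) that unfolding tm_runs_in_time_def state_at_def by blast
  show ?thesis
  proof (intro exI[of _ MQ] conjI)
    show "is_mqtm MQ" by (rule is_mqtm_MQ)
    show "cq_qblank MQ = Inl (tm_blank M)" "Inl ` tm_alpha M \<subseteq> cq_qalpha MQ"
      by (simp_all add: SQ_def)
    show "\<exists>c N. \<forall>x. valid_input M x \<and> N \<le> length x \<longrightarrow>
        expected_time MQ (map Inl x) \<le> ennreal (c * real (f (length x)))"
      using expected_time_MQ_le[OF assms(2)] by blast
    show "\<forall>x. valid_input M x \<longrightarrow> cq_outputs MQ (map Inl x) (map_tm_out Inl (tm_output M x))"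
      using cq_outputs_MQ halts by blast
  qed
qed

end
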